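(* Let $n \geqslant 14$ be an integer and let $X = \mathrm{A}_n$ or $X = \mathrm{S}_n$. Let $p_{\mathrm{intrans}}(X)$ denote the probability that two elements of $X$, chosen independently and uniformly at random, generate a subgroup contained in some intransitive maximal subgroup of $X$. Then $$p_{\mathrm{intrans}}(X) > \frac{1}{n} + \frac{0.93}{n^2}.$$
   Context: $\mathrm{S}_n$ and $\mathrm{A}_n$ denote the symmetric and alternating groups of degree $n$, acting naturally on $\{1,\dots,n\}$; "intransitive" refers to this natural action. *)

theory Defs
  imports "HOL-Algebra.Sym_Groups" "HOL-Algebra.Generated_Groups" Complex_Main
begin

definition maximal_subgroup :: "'a set \<Rightarrow> ('a, 'b) monoid_scheme \<Rightarrow> bool" where
  "maximal_subgroup M G \<longleftrightarrow> subgroup M G \<and> M \<noteq> carrier G \<and>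
     (\<forall>H. subgroup H G \<and> M \<subseteq> H \<longrightarrow> H = M \<or> H = carrier G)"

definition intransitive_on :: "nat \<Rightarrow> (nat \<Rightarrow> nat) set \<Rightarrow> bool" where
  "intransitive_on n M \<longleftrightarrow> (\<exists>i\<in>{1..n}. \<exists>j\<in>{1..n}. \<forall>h\<in>M. h i \<noteq> j)"

definition p_intrans :: "nat \<Rightarrow> (nat \<Rightarrow> nat) monoid \<Rightarrow> real" where
  "p_intrans n G =
     real (card {(x, y) \<in> carrier G \<times> carrier G.
              \<exists>M. maximal_subgroup M G \<and> intransitive_on n M \<and> generate G {x, y} \<subseteq> M})
     / real (card (carrier G)) ^ 2"

end

theory Submission
  imports Defs
begin

text \<open>Stabilisers of a point and of a 2-set are intransitive maximal subgroups of \<open>X\<close>: a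
  strictly larger subgroup is transitive on points, resp. on 2-sets, so orbit counting forces it
  to be all of \<open>X\<close>. A pair lying in one of these stabilisers generates a subgroup inside it,
  so \<open>p_intrans X * |X|^2\<close> is at least the size of the union of these events. Bonferroni's
  inequality bounds the union by the first two inclusion-exclusion terms. Every term is computed
  from \<open>|X_K| = |X| / (n(n-1)...(n-|K|+1))\<close> for the pointwise stabiliser of \<open>|K| \<le> 4\<close> points,
  setwise stabilisers of pairs being twice as large by a halving argument with a double
  transposition. The bound obtained is
  \<open>|X|^2 (1/n + 1/(n(n-1)) - 3/(2n(n-1)(n-2)) - 9/(8n(n-1)(n-2)(n-3)))\<close>,
  which exceeds \<open>|X|^2 (1/n + 0.93/n^2)\<close> once \<open>n \<ge> 14\<close>.\<close>

lemma card_eq_twice_card_filter_if_involution: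
  assumes fin: "finite H" and inv: "\<tau> \<circ> \<tau> = id" and closed: "\<And>p. p \<in> H \<Longrightarrow> \<tau> \<circ> p \<in> H"
    and swaps: "\<And>p. p \<in> H \<Longrightarrow> Q (\<tau> \<circ> p) \<longleftrightarrow> \<not> Q p"
  shows "card H = 2 * card {p\<in>H. Q p}"
proof -
  let ?A = "{p\<in>H. Q p}" and ?B = "{p\<in>H. \<not> Q p}"
  have "bij_betw (\<lambda>p. \<tau> \<circ> p) ?A ?B"
  proof (rule bij_betw_byWitness[where f'="\<lambda>p. \<tau> \<circ> p"])
    show "\<forall>a\<in>?A. \<tau> \<circ> (\<tau> \<circ> a) = a" "\<forall>a\<in>?B. \<tau> \<circ> (\<tau> \<circ> a) = a"
      using inv by (simp_all add: comp_assoc[symmetric])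
    show "(\<circ>) \<tau> ` ?A \<subseteq> ?B" "(\<circ>) \<tau> ` ?B \<subseteq> ?A" using closed swaps by auto
  qed
  then have "card ?A = card ?B" by (rule bij_betw_same_card)
  moreover have "card H = card ?A + card ?B"
    using fin by (subst card_Un_disjoint[symmetric]) (auto intro: arg_cong[where f = card])
  ultimately show ?thesis by simp
qed

lemma orbit_times_stabiliser_card_le:
  assumes fin: "finite H" and "M \<subseteq> H" and closed: "\<And>k m. k \<in> H \<Longrightarrow> m \<in> M \<Longrightarrow> k \<circ> m \<in> H"
    and inj: "\<And>k. k \<in> H \<Longrightarrow> inj k"
    and orbit: "\<And>y. y \<in> Y \<Longrightarrow> \<exists>k\<in>H. act k base = y"
    and stab: "\<And>k m. k \<in> H \<Longrightarrow> m \<in> M \<Longrightarrow> act (k \<circ> m) base = act k base"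
  shows "card Y * card M \<le> card H"
proof -
  define rep where "rep y = (SOME k. k \<in> H \<and> act k base = y)" for y
  have rep: "rep y \<in> H \<and> act (rep y) base = y" if "y \<in> Y" for y
    unfolding rep_def using someI_ex[OF orbit[OF that, unfolded Bex_def]] .
  have "inj_on (\<lambda>(y,m). rep y \<circ> m) (Y \<times> M)"
  proof (rule inj_onI, clarify)
    fix y m y' m' assume a: "y \<in> Y" "m \<in> M" "y' \<in> Y" "m' \<in> M" and e: "rep y \<circ> m = rep y' \<circ> m'"
    have "y = y'" using stab[of "rep y" m] stab[of "rep y'" m'] rep[OF a(1)] rep[OF a(3)] a e by metis
    moreover have "m = m'"
    proof
      fix z have "rep y (m z) = rep y (m' z)" using e \<open>y = y'\<close> by (metis comp_apply)
      then show "m z = m' z" using inj rep[OF a(1)] by (meson injD)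
    qed
    ultimately show "y = y' \<and> m = m'" by simp
  qed
  moreover have "(\<lambda>(y,m). rep y \<circ> m) ` (Y \<times> M) \<subseteq> H" using rep closed by auto
  ultimately have "card (Y \<times> M) \<le> card H" using card_inj_on_le fin by blast
  then show ?thesis by (simp add: card_cartesian_product)
qed

lemma card_Int_eq_sum_of_bool:
  assumes "finite U" "A \<subseteq> U"
  shows "real (card (A \<inter> B)) = (\<Sum>z\<in>U. of_bool (z \<in> A) * of_bool (z \<in> B))"
proof -
  have "(\<Sum>z\<in>U. of_bool (z \<in> A) * of_bool (z \<in> B)) = (\<Sum>z\<in>U. of_bool (z \<in> A \<inter> B) :: real)"
    by (simp add: of_bool_conj)
  also have "\<dots> = real (card (U \<inter> {z. z \<in> A \<inter> B}))" using assms(1) by simp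
  also have "U \<inter> {z. z \<in> A \<inter> B} = A \<inter> B" using assms(2) by auto
  finally show ?thesis by simp
qed

lemma sum_card_eq_sum_multiplicity:
  assumes "finite U" "\<And>i. i \<in> I \<Longrightarrow> A i \<subseteq> U"
  shows "(\<Sum>i\<in>I. real (card (A i))) = (\<Sum>z\<in>U. \<Sum>i\<in>I. of_bool (z \<in> A i))"
proof -
  have "real (card (A i)) = (\<Sum>z\<in>U. of_bool (z \<in> A i))" if "i \<in> I" for i
    using card_Int_eq_sum_of_bool[OF assms(1) assms(2)[OF that], of "A i"]
    by (simp add: of_bool_conj[symmetric])
  then have "(\<Sum>i\<in>I. real (card (A i))) = (\<Sum>i\<in>I. \<Sum>z\<in>U. of_bool (z \<in> A i))"
    by (rule sum.cong[OF refl])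
  then show ?thesis by (simp add: sum.swap[of _ I U])
qed

lemma sum_card_Int_eq_sum_multiplicity:
  assumes "finite I" "finite U" "\<And>i. i \<in> I \<Longrightarrow> A i \<subseteq> U"
  shows "(\<Sum>i\<in>I. \<Sum>j\<in>I-{i}. real (card (A i \<inter> A j)))
           = (\<Sum>z\<in>U. (\<Sum>i\<in>I. of_bool (z \<in> A i)) ^ 2 - (\<Sum>i\<in>I. of_bool (z \<in> A i)))"
proof -
  define c where "c z = (\<Sum>i\<in>I. of_bool (z \<in> A i) :: real)" for z
  let ?r = "\<lambda>i z. of_bool (z \<in> A i) :: real"
  have others: "(\<Sum>j\<in>I-{i}. ?r j z) = c z - ?r i z" if "i \<in> I" for i z
    unfolding c_def using sum.remove[OF assms(1) that, of "\<lambda>j. ?r j z"] by simp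
  have "(\<Sum>i\<in>I. \<Sum>j\<in>I-{i}. real (card (A i \<inter> A j)))
      = (\<Sum>i\<in>I. \<Sum>j\<in>I-{i}. \<Sum>z\<in>U. ?r i z * ?r j z)"
    using card_Int_eq_sum_of_bool[OF assms(2,3)] by simp
  also have "\<dots> = (\<Sum>z\<in>U. \<Sum>i\<in>I. ?r i z * (\<Sum>j\<in>I-{i}. ?r j z))"
    by (simp add: sum_distrib_left sum.swap[of _ "I - {_}" U] sum.swap[of _ I U])
  also have "\<dots> = (\<Sum>z\<in>U. \<Sum>i\<in>I. ?r i z * c z - ?r i z)"
    by (intro sum.cong refl) (simp add: others right_diff_distrib)
  also have "\<dots> = (\<Sum>z\<in>U. c z ^ 2 - c z)"
    by (simp add: sum_subtractf c_def sum_distrib_right power2_eq_square)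
  finally show ?thesis unfolding c_def .
qed

lemma nat_minus_pairs_le_one: "real m - (real m * real m - real m) / 2 \<le> 1"
proof -
  have "(real m - 1) * (real m - 2) \<ge> 0"
    by (cases "m \<le> 1") (auto simp: le_Suc_eq mult_nonneg_nonneg)
  then show ?thesis by (simp add: algebra_simps field_simps)
qed

text \<open>A point lying in exactly \<open>c\<close> of the sets contributes \<open>c - c(c-1)/2 \<le> 1\<close> to the
  right-hand side.\<close>

lemma card_UNION_ge_Bonferroni:
  fixes A :: "'i \<Rightarrow> 'a set"
  assumes finI: "finite I" and finA: "\<And>i. i \<in> I \<Longrightarrow> finite (A i)"
  shows "real (card (\<Union>i\<in>I. A i)) \<ge> (\<Sum>i\<in>I. real (card (A i)))
            - (\<Sum>i\<in>I. \<Sum>j\<in>I-{i}. real (card (A i \<inter> A j))) / 2"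
proof -
  define U where "U = (\<Union>i\<in>I. A i)"
  define c where "c z = (\<Sum>i\<in>I. of_bool (z \<in> A i) :: real)" for z
  have finU: "finite U" unfolding U_def using finI finA by auto
  have sub: "A i \<subseteq> U" if "i \<in> I" for i unfolding U_def using that by auto
  have "(\<Sum>i\<in>I. real (card (A i))) = (\<Sum>z\<in>U. c z)"
    unfolding c_def by (rule sum_card_eq_sum_multiplicity[of U I A, OF finU sub])
  moreover have "(\<Sum>i\<in>I. \<Sum>j\<in>I-{i}. real (card (A i \<inter> A j))) = (\<Sum>z\<in>U. c z ^ 2 - c z)"
    unfolding c_def by (rule sum_card_Int_eq_sum_multiplicity[of I U A, OF finI finU sub])
  ultimately have "(\<Sum>i\<in>I. real (card (A i))) - (\<Sum>i\<in>I. \<Sum>j\<in>I-{i}. real (card (A i \<inter> A j))) / 2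
      = (\<Sum>z\<in>U. c z - (c z ^ 2 - c z) / 2)"
    by (simp add: sum_subtractf sum_divide_distrib[symmetric])
  also have "\<dots> \<le> (\<Sum>z\<in>U. 1)"
  proof (rule sum_mono)
    fix z
    have "c z = real (card (I \<inter> {i. z \<in> A i}))" unfolding c_def using finI by simp
    then show "c z - (c z ^ 2 - c z) / 2 \<le> 1" using nat_minus_pairs_le_one by (simp add: power2_eq_square)
  qed
  finally show ?thesis unfolding U_def by simp
qed

lemma real_choose_two: "real (m choose 2) = real m * (real m - 1) / 2"
proof (cases m)
  case (Suc k)
  have "2 * (m choose 2) = m * (m - 1)" unfolding choose_two using Suc by simp
  then have "2 * real (m choose 2) = real m * real (m - 1)" by (metis of_nat_mult of_nat_numeral)
  then show ?thesis using Suc by (simp add: of_nat_diff)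
qed simp

lemma card_Times_self_real: "real (card (A \<times> A)) = real (card A) ^ 2"
  by (simp add: card_cartesian_product power2_eq_square)

lemma card_Times_self_Diff_real:
  assumes "finite A" "B \<subseteq> A"
  shows "real (card (A \<times> A - B \<times> B)) = real (card A) ^ 2 - real (card B) ^ 2"
proof -
  have sub: "B \<times> B \<subseteq> A \<times> A" using assms by auto
  moreover have "finite (B \<times> B)" using assms finite_subset by blast
  ultimately have "card (A \<times> A - B \<times> B) = card (A \<times> A) - card (B \<times> B)" by (simp add: card_Diff_subset)
  moreover have "card (B \<times> B) \<le> card (A \<times> A)" using card_mono[OF _ sub] assms by simp
  ultimately show ?thesis by (simp add: of_nat_diff card_Times_self_real)
qed

lemma card_Times_self_Diff_Un_real:
  assumes "finite P" "A \<subseteq> P" "B \<subseteq> P"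
  shows "real (card (P \<times> P - (A \<times> A \<union> B \<times> B)))
           = real (card P) ^ 2 - real (card A) ^ 2 - real (card B) ^ 2 + real (card (A \<inter> B)) ^ 2"
proof -
  have sub: "A \<times> A \<union> B \<times> B \<subseteq> P \<times> P" using assms by auto
  have fin: "finite (P \<times> P)" "finite (A \<times> A)" "finite (B \<times> B)"
    using assms finite_subset[of A P] finite_subset[of B P] by auto
  have "real (card (P \<times> P - (A \<times> A \<union> B \<times> B))) = real (card (P \<times> P)) - real (card (A \<times> A \<union> B \<times> B))"
    using card_Diff_subset[OF finite_subset[OF sub fin(1)] sub] card_mono[OF fin(1) sub]
    by (simp add: of_nat_diff)
  moreover have "real (card (A \<times> A \<union> B \<times> B))
      = real (card (A \<times> A)) + real (card (B \<times> B)) - real (card ((A \<inter> B) \<times> (A \<inter> B)))"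
    using card_Un_Int[OF fin(2,3)] by (simp add: Times_Int_Times)
  ultimately show ?thesis by (simp add: card_Times_self_real)
qed

lemma sum_if_const_real:
  "finite A \<Longrightarrow> (\<Sum>a\<in>A. if P a then (c::real) else 0) = real (card {a\<in>A. P a}) * c"
  by (simp add: sum.inter_filter[symmetric])

lemma obtain_two_outside:
  assumes "finite Z" "card Z + 2 \<le> n"
  obtains u v where "u \<in> {1..n}" "v \<in> {1..n}" "u \<noteq> v" "u \<notin> Z" "v \<notin> Z"
proof -
  have "card {1..n} - card Z \<le> card ({1..n} - Z)" using diff_card_le_card_Diff[OF assms(1)] .
  then have "2 \<le> card ({1..n} - Z)" using assms by simp
  then obtain T where T: "T \<subseteq> {1..n} - Z" "card T = 2" by (meson obtain_subset_with_card_n)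
  then obtain u v where "T = {u, v}" "u \<noteq> v" by (auto simp: card_2_iff)
  then show ?thesis using that T(1) by blast
qed

lemma sum_image_Inl_Un_image_Inr:
  assumes "finite A" "finite B"
  shows "(\<Sum>k\<in>Inl ` A \<union> Inr ` B. f k) = (\<Sum>a\<in>A. f (Inl a)) + (\<Sum>b\<in>B. f (Inr b))"
  using assms by (subst sum.union_disjoint) (auto simp: sum.reindex)

definition falling_factorial :: "nat \<Rightarrow> nat \<Rightarrow> nat" where
  "falling_factorial n k = (\<Prod>i<k. n - i)"

lemma fact_diff_mult_falling_factorial:
  "k \<le> n \<Longrightarrow> fact (n - k) * falling_factorial n k = (fact n :: nat)"
proof (induction k)
  case (Suc k)
  have "n - k = Suc (n - Suc k)" using Suc.prems by simp
  then have "fact (n - k) = (n - k) * (fact (n - Suc k) :: nat)"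
    by (simp only: fact_Suc) simp
  moreover have "falling_factorial n (Suc k) = falling_factorial n k * (n - k)"
    unfolding falling_factorial_def by simp
  ultimately show ?case using Suc by (simp add: mult_ac)
qed (simp add: falling_factorial_def)

definition pointwise_stab :: "('a \<Rightarrow> 'a) set \<Rightarrow> 'a set \<Rightarrow> ('a \<Rightarrow> 'a) set" where
  "pointwise_stab C K = {p\<in>C. \<forall>k\<in>K. p k = k}"

definition setwise_stab :: "('a \<Rightarrow> 'a) set \<Rightarrow> 'a set \<Rightarrow> ('a \<Rightarrow> 'a) set" where
  "setwise_stab C S = {p\<in>C. p ` S = S}"

definition set_orbit :: "('a \<Rightarrow> 'a) set \<Rightarrow> 'a set \<Rightarrow> 'a set set" where
  "set_orbit H S = (\<lambda>k. k ` S) ` H"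

lemma pointwise_stab_Int: "pointwise_stab C K \<inter> pointwise_stab C L = pointwise_stab C (K \<union> L)"
  unfolding pointwise_stab_def by auto

lemma pointwise_stab_subset_setwise_stab: "pointwise_stab C K \<subseteq> setwise_stab C K"
  unfolding pointwise_stab_def setwise_stab_def by force

lemma permutes_fixing_iff_permutes_Diff:
  assumes "K \<subseteq> A"
  shows "p permutes A \<and> (\<forall>k\<in>K. p k = k) \<longleftrightarrow> p permutes (A - K)"
  using assms permutes_subset[of p "A - K" A] permutes_not_in[of p "A - K"]
  unfolding permutes_def by blast

lemma card_even_permutations:
  assumes fin: "finite A" and "u \<in> A" "v \<in> A" "u \<noteq> v"
  shows "2 * card {p. p permutes A \<and> evenperm p} = fact (card A)"
proof -
  have "card {p. p permutes A} = 2 * card {p\<in>{p. p permutes A}. evenperm p}"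
  proof (rule card_eq_twice_card_filter_if_involution[where \<tau>="transpose u v"])
    show "finite {p. p permutes A}" using finite_permutations[OF fin] .
    show "transpose u v \<circ> transpose u v = id" by simp
    show "transpose u v \<circ> p \<in> {p. p permutes A}" if "p \<in> {p. p permutes A}" for p
      using permutes_compose[OF that[simplified] permutes_swap_id[OF assms(2,3)]] by simp
    show "evenperm (transpose u v \<circ> p) = (\<not> evenperm p)" if "p \<in> {p. p permutes A}" for p
      using evenperm_comp[OF permutation_swap_id permutes_imp_permutation[OF fin], of p u v]
        evenperm_swap[of u v] assms(4) that by simp
  qed
  then show ?thesis using card_permutations[OF refl fin] by simp
qed

lemma card_pointwise_stab_sym_group:
  assumes "K \<subseteq> {1..n}"
  shows "card (pointwise_stab (carrier (sym_group n)) K) * falling_factorial n (card K)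
           = card (carrier (sym_group n))"
proof -
  have "finite K" using assms finite_subset by blast
  then have "card ({1..n} - K) = n - card K" using card_Diff_subset[OF _ assms] by simp
  then have "card {p. p permutes ({1..n} - K)} = fact (n - card K)"
    by (simp add: card_permutations)
  moreover have "card K \<le> n" using card_mono[OF _ assms] by simp
  moreover have "pointwise_stab (carrier (sym_group n)) K = {p. p permutes ({1..n} - K)}"
    unfolding pointwise_stab_def sym_group_carrier using permutes_fixing_iff_permutes_Diff[OF assms]
    by blast
  ultimately show ?thesis unfolding sym_group_card_carrier
    using fact_diff_mult_falling_factorial by simp
qed

lemma card_pointwise_stab_alt_group:
  assumes "K \<subseteq> {1..n}" and "card K + 2 \<le> n"
  shows "card (pointwise_stab (carrier (alt_group n)) K) * falling_factorial n (card K)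
           = card (carrier (alt_group n))"
proof -
  have fin: "finite K" using assms finite_subset by blast
  have card_Diff: "card ({1..n} - K) = n - card K" using card_Diff_subset[OF fin assms(1)] by simp
  obtain u v where uv: "u \<in> {1..n} - K" "v \<in> {1..n} - K" "u \<noteq> v"
    using obtain_two_outside[OF fin assms(2)] by blast
  have "pointwise_stab (carrier (alt_group n)) K = {p. p permutes ({1..n} - K) \<and> evenperm p}"
    unfolding pointwise_stab_def alt_group_carrier using permutes_fixing_iff_permutes_Diff[OF assms(1)]
    by blast
  then have "2 * card (pointwise_stab (carrier (alt_group n)) K) = fact (n - card K)"
    using card_even_permutations[OF _ uv] card_Diff by simp
  moreover have "2 * card (carrier (alt_group n)) = fact n" using alt_group_card_carrier assms by simp
  ultimately have "2 * (card (pointwise_stab (carrier (alt_group n)) K) * falling_factorial n (card K))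
                     = 2 * card (carrier (alt_group n))"
    using fact_diff_mult_falling_factorial[of "card K" n] assms(2) by (simp only: mult.assoc[symmetric])
  then show ?thesis by simp
qed

lemma bonferroni_bound_closed_form:
  fixes x a b c g :: real assumes "x \<noteq> 0" "a \<noteq> 0" "b \<noteq> 0" "c \<noteq> 0"
  shows "x*(g/x)^2 + x*a/2*(3*(g/(x*a))^2)
     - (x*(a*(g/(x*a))^2 + a*b/2*(3*(g/(x*a*b))^2))
        + x*a/2*(b*(3*(g/(x*a*b))^2) + b*c/2*(9*(g/(x*a*b*c))^2)))/2
     = g^2 * (1/x + 1/(x*a) - 3/(2*x*a*b) - 9/(8*x*a*b*c))"
  using assms by (simp add: field_simps power2_eq_square)

text \<open>Over the common denominator \<open>D\<close> the claim becomes the positivity of a cubic, all of whose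
  coefficients are positive in \<open>t = x - 14\<close>.\<close>

lemma correction_term_gt:
  fixes x :: real assumes x: "x \<ge> 14"
  shows "1/(x*(x-1)) - 3/(2*x*(x-1)*(x-2)) - 9/(8*x*(x-1)*(x-2)*(x-3)) > 0.93/x^2"
proof -
  have pos: "x - 1 > 0" "x - 2 > 0" "x - 3 > 0" "x > 0" using x by auto
  define D where "D = 8*x*(x-1)*(x-2)*(x-3)"
  define Q where "Q = 8*(x-2)*(x-3) - 12*(x-3) - 9"
  have common_denominator: "1/(x*a) - 3/(2*x*a*b) - 9/(8*x*a*b*c) = (8*b*c - 12*c - 9) / (8*x*a*b*c)"
    if "a > 0" "b > 0" "c > 0" for a b c
    using that pos(4) by (simp add: field_simps)
  have lhs: "1/(x*(x-1)) - 3/(2*x*(x-1)*(x-2)) - 9/(8*x*(x-1)*(x-2)*(x-3)) = Q / D"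
    unfolding D_def Q_def using common_denominator pos by (simp add: mult.assoc)
  define t where "t = x - 14"
  have t: "t \<ge> 0" using x by (simp add: t_def)
  have "56*t^3 + 1616*t^2 + 11636*t + 4296 > 0"
    using t zero_le_power[OF t, of 3] zero_le_power[OF t, of 2] by linarith
  also have "56*t^3 + 1616*t^2 + 11636*t + 4296 = 56*x^3 - 736*x^2 - 684*x + 4464"
    unfolding t_def by (simp add: algebra_simps power2_eq_square power3_eq_cube)
  finally have "x * (56*x^3 - 736*x^2 - 684*x + 4464) > 0"
    using pos(4) by simp
  also have "x * (56*x^3 - 736*x^2 - 684*x + 4464) = 100 * (Q * x^2 - 0.93 * D)"
    unfolding D_def Q_def by (simp add: algebra_simps power2_eq_square power3_eq_cube)
  finally have "0.93 * D < Q * x^2" by simp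
  moreover have "D > 0" unfolding D_def using pos by simp
  ultimately show ?thesis unfolding lhs using pos by (simp add: divide_less_eq less_divide_eq)
qed

locale sym_or_alt_group =
  fixes n :: nat and X :: "(nat \<Rightarrow> nat) monoid"
  assumes n_ge_14: "n \<ge> 14"
    and is_group: "group X"
    and carrier_permutes: "\<And>p. p \<in> carrier X \<Longrightarrow> p permutes {1..n}"
    and mult_eq: "mult X = (\<circ>)"
    and one_eq: "one X = id"
    and in_carrier_up_to_transposition: "\<And>q u v. q permutes {1..n} \<Longrightarrow> u \<in> {1..n} \<Longrightarrow>
          v \<in> {1..n} \<Longrightarrow> u \<noteq> v \<Longrightarrow> q \<in> carrier X \<or> q \<circ> transpose u v \<in> carrier X"
    and double_transposition_in_carrier: "\<And>a b u v. a \<in> {1..n} \<Longrightarrow> b \<in> {1..n} \<Longrightarrow>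
          u \<in> {1..n} \<Longrightarrow> v \<in> {1..n} \<Longrightarrow> distinct [a, b, u, v] \<Longrightarrow>
          transpose a b \<circ> transpose u v \<in> carrier X"
    and card_pointwise_stab: "\<And>K. K \<subseteq> {1..n} \<Longrightarrow> card K \<le> 4 \<Longrightarrow>
          card (pointwise_stab (carrier X) K) * falling_factorial n (card K) = card (carrier X)"
begin

abbreviation "C \<equiv> carrier X"
abbreviation "N \<equiv> {1..n}"

lemma finite_carrier: "finite C"
proof -
  have "C \<subseteq> {p. p permutes N}" using carrier_permutes by blast
  then show ?thesis using finite_permutations[of N] finite_subset by blast
qed

lemma comp_in_carrier: "p \<in> C \<Longrightarrow> q \<in> C \<Longrightarrow> p \<circ> q \<in> C"
  using monoid.m_closed[OF group.is_monoid[OF is_group], of p q] mult_eq by simp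

lemma id_in_carrier: "id \<in> C"
  using group.is_monoid[OF is_group] monoid.one_closed one_eq by metis

lemma inv_in_carrier:
  assumes "p \<in> C"
  shows "inv\<^bsub>X\<^esub> p \<in> C" "\<And>z. (inv\<^bsub>X\<^esub> p) (p z) = z" "\<And>z. p ((inv\<^bsub>X\<^esub> p) z) = z"
proof -
  show "inv\<^bsub>X\<^esub> p \<in> C" using group.inv_closed[OF is_group assms] .
  have "inv\<^bsub>X\<^esub> p \<circ> p = id" "p \<circ> inv\<^bsub>X\<^esub> p = id"
    using group.l_inv[OF is_group assms] group.r_inv[OF is_group assms] mult_eq one_eq by simp_all
  then show "\<And>z. (inv\<^bsub>X\<^esub> p) (p z) = z" "\<And>z. p ((inv\<^bsub>X\<^esub> p) z) = z"
    by (metis comp_apply id_apply)+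
qed

lemma inj_carrier: "p \<in> C \<Longrightarrow> inj p"
  using carrier_permutes permutes_inj by blast

lemma carrier_maps_into: "p \<in> C \<Longrightarrow> z \<in> N \<Longrightarrow> p z \<in> N"
  using permutes_in_image[OF carrier_permutes] by blast

lemma subgroup_comp_closed: "subgroup H X \<Longrightarrow> p \<in> H \<Longrightarrow> q \<in> H \<Longrightarrow> p \<circ> q \<in> H"
  using subgroup.m_closed mult_eq by metis

lemma subgroup_id: "subgroup H X \<Longrightarrow> id \<in> H"
  using subgroup.one_closed one_eq by metis

lemma agrees_on_six_points:
  assumes "q0 permutes N" "length zs \<le> 6"
  obtains q where "q \<in> C" "\<And>z. z \<in> set zs \<Longrightarrow> q z = q0 z"
proof -
  have "card (set zs) + 2 \<le> n" using card_length[of zs] assms(2) n_ge_14 by linarith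
  then obtain u v where uv: "u \<in> N" "v \<in> N" "u \<noteq> v" "u \<notin> set zs" "v \<notin> set zs"
    using obtain_two_outside[of "set zs"] by blast
  from in_carrier_up_to_transposition[OF assms(1) uv(1-3)] show ?thesis
  proof
    assume "q0 \<circ> transpose u v \<in> C"
    moreover have "(q0 \<circ> transpose u v) z = q0 z" if "z \<in> set zs" for z
      using that uv by (auto simp: transpose_def)
    ultimately show ?thesis using that by blast
  qed (use that in blast)
qed

lemma obtain_two_avoiding:
  obtains u v where "u \<in> N" "v \<in> N" "u \<noteq> v" "u \<notin> {a, b, c, d}" "v \<notin> {a, b, c, d}"
proof -
  have "card {a, b, c, d} \<le> 4" by (auto simp: card_insert_if)
  then have "card {a, b, c, d} + 2 \<le> n" using n_ge_14 by linarith
  then show ?thesis using obtain_two_outside[of "{a, b, c, d}" n] that by blast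
qed

lemma comp_in_pointwise_stab:
  "p \<in> pointwise_stab C K \<Longrightarrow> t \<in> C \<Longrightarrow> (\<And>k. k \<in> K \<Longrightarrow> t k = k) \<Longrightarrow> t \<circ> p \<in> pointwise_stab C K"
  unfolding pointwise_stab_def using comp_in_carrier by auto

lemma comp_in_setwise_stab:
  assumes "p \<in> setwise_stab C S" "t \<in> C" "t ` S = S"
  shows "t \<circ> p \<in> setwise_stab C S"
proof -
  have "(t \<circ> p) ` S = t ` (p ` S)" by (rule image_comp[symmetric])
  then show ?thesis using assms comp_in_carrier unfolding setwise_stab_def by simp
qed

lemma subgroup_pointwise_stab: "subgroup (pointwise_stab C K) X"
proof (rule group.subgroupI[OF is_group])
  show "pointwise_stab C K \<subseteq> C" "pointwise_stab C K \<noteq> {}"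
    using id_in_carrier unfolding pointwise_stab_def by auto
next
  fix p assume p: "p \<in> pointwise_stab C K"
  then have pC: "p \<in> C" unfolding pointwise_stab_def by blast
  have "(inv\<^bsub>X\<^esub> p) k = k" if "k \<in> K" for k
    using inv_in_carrier(2)[OF pC, of k] p that unfolding pointwise_stab_def by simp
  then show "inv\<^bsub>X\<^esub> p \<in> pointwise_stab C K"
    using inv_in_carrier(1)[OF pC] unfolding pointwise_stab_def by blast
next
  fix p q assume p: "p \<in> pointwise_stab C K" and q: "q \<in> pointwise_stab C K"
  then have "p \<in> C" "\<And>k. k \<in> K \<Longrightarrow> p k = k" unfolding pointwise_stab_def by auto
  then show "p \<otimes>\<^bsub>X\<^esub> q \<in> pointwise_stab C K"
    using comp_in_pointwise_stab[OF q] mult_eq by simp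
qed

lemma subgroup_setwise_stab: "subgroup (setwise_stab C S) X"
proof (rule group.subgroupI[OF is_group])
  show "setwise_stab C S \<subseteq> C" "setwise_stab C S \<noteq> {}"
    using id_in_carrier unfolding setwise_stab_def by auto
next
  fix p assume p: "p \<in> setwise_stab C S"
  then have pC: "p \<in> C" and pS: "p ` S = S" unfolding setwise_stab_def by auto
  have "(inv\<^bsub>X\<^esub> p) ` S = (inv\<^bsub>X\<^esub> p) ` (p ` S)" using pS by simp
  also have "\<dots> = S" using inv_in_carrier(2)[OF pC] by (simp add: image_comp)
  finally show "inv\<^bsub>X\<^esub> p \<in> setwise_stab C S"
    using inv_in_carrier(1)[OF pC] unfolding setwise_stab_def by auto
next
  fix p q assume p: "p \<in> setwise_stab C S" and q: "q \<in> setwise_stab C S"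
  then have "p \<in> C" "p ` S = S" unfolding setwise_stab_def by auto
  then show "p \<otimes>\<^bsub>X\<^esub> q \<in> setwise_stab C S"
    using comp_in_setwise_stab[OF q] mult_eq by simp
qed

lemma setwise_stab_pair_fixing_point:
  assumes "p \<in> setwise_stab C {a, b}" "p a = a" "a \<noteq> b"
  shows "p \<in> pointwise_stab C {a, b}"
proof -
  have pS: "p ` {a, b} = {a, b}" and pC: "p \<in> C" using assms(1) unfolding setwise_stab_def by auto
  have "p b \<noteq> p a" using inj_carrier[OF pC] assms(3) by (metis injD)
  moreover have "p b \<in> {a, b}" using pS by blast
  ultimately show ?thesis using assms pC unfolding pointwise_stab_def by auto
qed

lemma card_eq_twice_card_Int_pointwise_stab:
  assumes "a \<in> N" "b \<in> N" "u \<in> N" "v \<in> N" "distinct [a, b, u, v]"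
    and H: "H \<subseteq> setwise_stab C {a, b}"
    and closed: "\<And>p. p \<in> H \<Longrightarrow> transpose a b \<circ> transpose u v \<circ> p \<in> H"
  shows "card H = 2 * card (H \<inter> pointwise_stab C {a, b})"
proof -
  let ?\<tau> = "transpose a b \<circ> transpose u v"
  have fin: "finite H" using H finite_carrier unfolding setwise_stab_def by (auto intro: finite_subset)
  have "card H = 2 * card {p\<in>H. p a = a}"
  proof (rule card_eq_twice_card_filter_if_involution[OF fin _ closed])
    show "?\<tau> \<circ> ?\<tau> = id" using assms(5) by (auto simp: fun_eq_iff transpose_def)
    fix p assume "p \<in> H"
    then have "p a \<in> {a, b}" using H unfolding setwise_stab_def by blast
    then show "(?\<tau> \<circ> p) a = a \<longleftrightarrow> p a \<noteq> a" using assms(5) by (auto simp: transpose_def)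
  qed
  moreover have "{p\<in>H. p a = a} = H \<inter> pointwise_stab C {a, b}"
    using H setwise_stab_pair_fixing_point assms(5) unfolding pointwise_stab_def by auto
  ultimately show ?thesis by simp
qed

definition stab_card :: "nat \<Rightarrow> real" where
  "stab_card k = real (card C) / real (falling_factorial n k)"

lemma card_pointwise_stab_real:
  assumes "K \<subseteq> N" "card K = k" "k \<le> 4"
  shows "real (card (pointwise_stab C K)) = stab_card k"
proof -
  have "falling_factorial n k > 0"
    unfolding falling_factorial_def using n_ge_14 assms(3) by (auto intro!: prod_pos)
  then show ?thesis using card_pointwise_stab[OF assms(1)] assms(2,3) unfolding stab_card_def
    by (metis nonzero_eq_divide_eq of_nat_0_less_iff of_nat_mult less_irrefl)
qed

lemma card_pointwise_stab_Int_setwise_stab: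
  assumes "K \<subseteq> N" "card K \<le> 2" "a \<in> N" "b \<in> N" "a \<noteq> b" "a \<notin> K" "b \<notin> K"
  shows "real (card (pointwise_stab C K \<inter> setwise_stab C {a, b})) = 2 * stab_card (card K + 2)"
proof -
  have finK: "finite K" using assms(1) finite_subset by blast
  have "card {a, b} \<le> 2" by (simp add: card_insert_if)
  then have "card (K \<union> {a, b}) + 2 \<le> n"
    using card_Un_le[of K "{a, b}"] assms(2) n_ge_14 by linarith
  then obtain u v where uv: "u \<in> N" "v \<in> N" "u \<noteq> v" "u \<notin> K \<union> {a, b}" "v \<notin> K \<union> {a, b}"
    using obtain_two_outside[of "K \<union> {a, b}" n] finK by blast
  let ?\<tau> = "transpose a b \<circ> transpose u v"
  have \<tau>: "?\<tau> \<in> C" by (intro double_transposition_in_carrier) (use assms uv in auto)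
  have "card (pointwise_stab C K \<inter> setwise_stab C {a, b})
          = 2 * card (pointwise_stab C K \<inter> setwise_stab C {a, b} \<inter> pointwise_stab C {a, b})"
  proof (rule card_eq_twice_card_Int_pointwise_stab[of a b u v])
    fix p assume "p \<in> pointwise_stab C K \<inter> setwise_stab C {a, b}"
    moreover have "?\<tau> ` {a, b} = {a, b}" "\<And>k. k \<in> K \<Longrightarrow> ?\<tau> k = k"
      using assms uv by (auto simp: transpose_def)
    ultimately show "?\<tau> \<circ> p \<in> pointwise_stab C K \<inter> setwise_stab C {a, b}"
      using comp_in_pointwise_stab[OF _ \<tau>] comp_in_setwise_stab[OF _ \<tau>] by blast
  qed (use assms uv in auto)
  also have "pointwise_stab C K \<inter> setwise_stab C {a, b} \<inter> pointwise_stab C {a, b}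
               = pointwise_stab C (K \<union> {a, b})"
    using pointwise_stab_subset_setwise_stab[of C "{a, b}"] pointwise_stab_Int by blast
  finally show ?thesis
    using card_pointwise_stab_real[of "K \<union> {a, b}" "card K + 2"] assms finK by simp
qed

lemma card_setwise_stab_pair_real:
  assumes "a \<in> N" "b \<in> N" "a \<noteq> b"
  shows "real (card (setwise_stab C {a, b})) = 2 * stab_card 2"
proof -
  have "pointwise_stab C {} \<inter> setwise_stab C {a, b} = setwise_stab C {a, b}"
    unfolding pointwise_stab_def setwise_stab_def by auto
  then show ?thesis using card_pointwise_stab_Int_setwise_stab[of "{}" a b] assms
    by (simp add: numeral_2_eq_2)
qed

lemma card_setwise_stab_Int_setwise_stab:
  assumes "a \<in> N" "b \<in> N" "c \<in> N" "d \<in> N" "distinct [a, b, c, d]"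
  shows "real (card (setwise_stab C {a, b} \<inter> setwise_stab C {c, d})) = 4 * stab_card 4"
proof -
  obtain u v where uv: "u \<in> N" "v \<in> N" "u \<noteq> v" "u \<notin> {a, b, c, d}" "v \<notin> {a, b, c, d}"
    using obtain_two_avoiding .
  let ?\<tau> = "transpose a b \<circ> transpose u v"
  have \<tau>: "?\<tau> \<in> C" by (intro double_transposition_in_carrier) (use assms uv in auto)
  have "card (setwise_stab C {a, b} \<inter> setwise_stab C {c, d})
          = 2 * card (setwise_stab C {a, b} \<inter> setwise_stab C {c, d} \<inter> pointwise_stab C {a, b})"
  proof (rule card_eq_twice_card_Int_pointwise_stab[of a b u v])
    fix p assume "p \<in> setwise_stab C {a, b} \<inter> setwise_stab C {c, d}"
    moreover have "?\<tau> ` {a, b} = {a, b}" "?\<tau> ` {c, d} = {c, d}"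
      using assms uv by (auto simp: transpose_def)
    ultimately show "?\<tau> \<circ> p \<in> setwise_stab C {a, b} \<inter> setwise_stab C {c, d}"
      using comp_in_setwise_stab[OF _ \<tau>] by blast
  qed (use assms uv in auto)
  also have "setwise_stab C {a, b} \<inter> setwise_stab C {c, d} \<inter> pointwise_stab C {a, b}
               = pointwise_stab C {a, b} \<inter> setwise_stab C {c, d}"
    using pointwise_stab_subset_setwise_stab[of C "{a, b}"] by blast
  finally show ?thesis
    using card_pointwise_stab_Int_setwise_stab[of "{a, b}" c d] assms by (simp add: numeral_eq_Suc)
qed

lemma stab_card_values:
  "stab_card 1 = real (card C) / real n"
  "stab_card 2 = real (card C) / (real n * (real n - 1))"
  "stab_card 3 = real (card C) / (real n * (real n - 1) * (real n - 2))"
  "stab_card 4 = real (card C) / (real n * (real n - 1) * (real n - 2) * (real n - 3))"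
  using n_ge_14
  by (simp_all add: stab_card_def falling_factorial_def numeral_eq_Suc lessThan_Suc of_nat_diff)

definition two_subsets :: "nat set set" where
  "two_subsets = {S. S \<subseteq> N \<and> card S = 2}"

lemma two_subsetsE:
  assumes "S \<in> two_subsets"
  obtains a b where "S = {a, b}" "a \<noteq> b" "a \<in> N" "b \<in> N"
proof -
  have "card S = 2" "S \<subseteq> N" using assms unfolding two_subsets_def by auto
  then show ?thesis using that unfolding card_2_iff by blast
qed

lemma finite_two_subsets: "finite two_subsets"
  unfolding two_subsets_def by (rule finite_subset[of _ "Pow N"]) auto

lemma card_two_subsets: "card two_subsets = n choose 2"
  unfolding two_subsets_def using n_subsets[of N 2] by simp

lemma card_two_subsets_avoiding:
  assumes "i \<in> N"
  shows "card {S\<in>two_subsets. i \<notin> S} = (n - 1) choose 2"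
proof -
  have "{S\<in>two_subsets. i \<notin> S} = {S. S \<subseteq> N - {i} \<and> card S = 2}"
    unfolding two_subsets_def by auto
  then show ?thesis using n_subsets[of "N - {i}" 2] assms by simp
qed

lemma card_two_subsets_disjoint:
  assumes "S \<in> two_subsets"
  shows "card {T\<in>two_subsets - {S}. S \<inter> T = {}} = (n - 2) choose 2"
proof -
  obtain a b where ab: "S = {a, b}" "a \<noteq> b" "a \<in> N" "b \<in> N" using two_subsetsE[OF assms] .
  then have "{T\<in>two_subsets - {S}. S \<inter> T = {}} = {T. T \<subseteq> N - S \<and> card T = 2}"
    unfolding two_subsets_def by auto
  moreover have "card (N - S) = n - 2" using ab by (simp add: card_Diff_subset)
  ultimately show ?thesis using n_subsets[of "N - S" 2] by simp
qed

text \<open>Event \<open>Inl i\<close> consists of the pairs fixing \<open>i\<close>, event \<open>Inr S\<close> of the pairs stabilising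
  the 2-set \<open>S\<close> but not both fixing it pointwise: those are already in the point events, and
  omitting them makes most intersections of events empty.\<close>

definition event_index :: "(nat + nat set) set" where
  "event_index = Inl ` N \<union> Inr ` two_subsets"

definition event :: "nat + nat set \<Rightarrow> ((nat \<Rightarrow> nat) \<times> (nat \<Rightarrow> nat)) set" where
  "event j = (case j of
       Inl i \<Rightarrow> pointwise_stab C {i} \<times> pointwise_stab C {i}
     | Inr S \<Rightarrow> setwise_stab C S \<times> setwise_stab C S - pointwise_stab C S \<times> pointwise_stab C S)"

lemma event_subset: "event j \<subseteq> C \<times> C"
  unfolding event_def pointwise_stab_def setwise_stab_def by (auto split: sum.splits)

lemma finite_event: "finite (event j)"
  using finite_subset[OF event_subset] finite_carrier by blast

lemma card_event_Inl: "i \<in> N \<Longrightarrow> real (card (event (Inl i))) = stab_card 1 ^ 2"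
  using card_pointwise_stab_real[of "{i}" 1] unfolding event_def by (simp add: card_Times_self_real)

lemma card_event_Inr:
  assumes "S \<in> two_subsets"
  shows "real (card (event (Inr S))) = 3 * stab_card 2 ^ 2"
proof -
  obtain a b where ab: "S = {a, b}" "a \<noteq> b" "a \<in> N" "b \<in> N" using two_subsetsE[OF assms] .
  have "finite (setwise_stab C S)" unfolding setwise_stab_def using finite_carrier by simp
  then have "real (card (event (Inr S)))
               = real (card (setwise_stab C S)) ^ 2 - real (card (pointwise_stab C S)) ^ 2"
    unfolding event_def by (simp add: card_Times_self_Diff_real pointwise_stab_subset_setwise_stab)
  then show ?thesis
    using card_setwise_stab_pair_real[of a b] card_pointwise_stab_real[of S 2] ab
    by (simp add: power2_eq_square)
qed

lemma card_event_Inl_Int_Inl: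
  assumes "i \<in> N" "j \<in> N" "i \<noteq> j"
  shows "real (card (event (Inl i) \<inter> event (Inl j))) = stab_card 2 ^ 2"
proof -
  have "event (Inl i) \<inter> event (Inl j) = pointwise_stab C {i, j} \<times> pointwise_stab C {i, j}"
    unfolding event_def pointwise_stab_def by auto
  then show ?thesis using card_pointwise_stab_real[of "{i, j}" 2] assms by (simp add: card_Times_self_real)
qed

lemma event_Inl_Int_Inr_empty:
  assumes "S \<in> two_subsets" "i \<in> S"
  shows "event (Inl i) \<inter> event (Inr S) = {}"
proof -
  obtain a b where "S = {a, b}" "a \<noteq> b" using two_subsetsE[OF assms(1)] by blast
  then have "\<exists>c. S = {i, c} \<and> i \<noteq> c" using assms(2) by (auto simp: insert_commute)
  then obtain c where S: "S = {i, c}" "i \<noteq> c" by blast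
  have "p \<in> pointwise_stab C S" if "p \<in> pointwise_stab C {i}" "p \<in> setwise_stab C S" for p
    using setwise_stab_pair_fixing_point[of p i c] that S unfolding pointwise_stab_def by auto
  then show ?thesis unfolding event_def by auto
qed

lemma card_event_Inl_Int_Inr:
  assumes "S \<in> two_subsets" "i \<in> N" "i \<notin> S"
  shows "real (card (event (Inl i) \<inter> event (Inr S))) = 3 * stab_card 3 ^ 2"
proof -
  obtain a b where ab: "S = {a, b}" "a \<noteq> b" "a \<in> N" "b \<in> N" using two_subsetsE[OF assms(1)] .
  let ?P = "pointwise_stab C {i} \<inter> setwise_stab C S"
  have fix3: "pointwise_stab C {i} \<inter> pointwise_stab C S = pointwise_stab C {i, a, b}"
    unfolding ab pointwise_stab_def by auto
  have "event (Inl i) \<inter> event (Inr S) = ?P \<times> ?P - pointwise_stab C {i, a, b} \<times> pointwise_stab C {i, a, b}"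
    unfolding event_def fix3[symmetric] by auto
  moreover have "pointwise_stab C {i, a, b} \<subseteq> ?P"
    using pointwise_stab_subset_setwise_stab[of C S] unfolding fix3[symmetric] by blast
  moreover have "finite ?P" unfolding setwise_stab_def using finite_carrier by simp
  ultimately have "real (card (event (Inl i) \<inter> event (Inr S)))
                     = real (card ?P) ^ 2 - real (card (pointwise_stab C {i, a, b})) ^ 2"
    by (simp add: card_Times_self_Diff_real)
  then show ?thesis
    using card_pointwise_stab_Int_setwise_stab[of "{i}" a b] card_pointwise_stab_real[of "{i, a, b}" 3]
      ab assms
    by (simp add: power2_eq_square numeral_eq_Suc card_insert_if)
qed

lemma event_Inr_Int_Inr_empty:
  assumes "S \<in> two_subsets" "T \<in> two_subsets" "S \<noteq> T" "S \<inter> T \<noteq> {}"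
  shows "event (Inr S) \<inter> event (Inr T) = {}"
proof -
  obtain z where z: "z \<in> S" "z \<in> T" using assms(4) by blast
  have "\<exists>w. S = {z, w} \<and> z \<noteq> w" "\<exists>w. T = {z, w} \<and> z \<noteq> w"
    using two_subsetsE[OF assms(1)] two_subsetsE[OF assms(2)] z by (auto simp: insert_commute)
  then obtain w w' where S: "S = {z, w}" "z \<noteq> w" and T: "T = {z, w'}" "z \<noteq> w'" by blast
  have "p \<in> pointwise_stab C S" if "p \<in> setwise_stab C S" "p \<in> setwise_stab C T" for p
  proof -
    have "p z \<in> S" "p z \<in> T" using that z unfolding setwise_stab_def by blast+
    then have "p z = z" using S T assms(3) by auto
    then show ?thesis using setwise_stab_pair_fixing_point[of p z w] that S by simp
  qed
  then show ?thesis unfolding event_def by auto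
qed

lemma card_event_Inr_Int_Inr:
  assumes "S \<in> two_subsets" "T \<in> two_subsets" "S \<inter> T = {}"
  shows "real (card (event (Inr S) \<inter> event (Inr T))) = 9 * stab_card 4 ^ 2"
proof -
  obtain a b where ab: "S = {a, b}" "a \<noteq> b" "a \<in> N" "b \<in> N" using two_subsetsE[OF assms(1)] .
  obtain c d where cd: "T = {c, d}" "c \<noteq> d" "c \<in> N" "d \<in> N" using two_subsetsE[OF assms(2)] .
  have distinct: "distinct [a, b, c, d]" using ab cd assms(3) by auto
  define P where "P = setwise_stab C S \<inter> setwise_stab C T"
  define A where "A = pointwise_stab C S \<inter> setwise_stab C T"
  define B where "B = setwise_stab C S \<inter> pointwise_stab C T"
  have "event (Inr S) \<inter> event (Inr T) = P \<times> P - (A \<times> A \<union> B \<times> B)"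
    unfolding event_def P_def A_def B_def
    using pointwise_stab_subset_setwise_stab[of C S] pointwise_stab_subset_setwise_stab[of C T] by auto
  moreover have "finite P" unfolding P_def setwise_stab_def using finite_carrier by simp
  moreover have "A \<subseteq> P" "B \<subseteq> P" unfolding P_def A_def B_def
    using pointwise_stab_subset_setwise_stab[of C S] pointwise_stab_subset_setwise_stab[of C T] by auto
  moreover have "A \<inter> B = pointwise_stab C S \<inter> pointwise_stab C T"
    unfolding A_def B_def
    using pointwise_stab_subset_setwise_stab[of C S] pointwise_stab_subset_setwise_stab[of C T] by blast
  then have "A \<inter> B = pointwise_stab C {a, b, c, d}"
    unfolding ab cd pointwise_stab_def by auto
  moreover have "real (card P) = 4 * stab_card 4"
    unfolding P_def ab cd using card_setwise_stab_Int_setwise_stab distinct ab cd by simp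
  moreover have "real (card A) = 2 * stab_card 4" "real (card B) = 2 * stab_card 4"
    unfolding A_def B_def ab cd
    using card_pointwise_stab_Int_setwise_stab[of "{a, b}" c d]
      card_pointwise_stab_Int_setwise_stab[of "{c, d}" a b] distinct ab cd
    by (simp_all add: Int_commute numeral_eq_Suc)
  moreover have "real (card (pointwise_stab C {a, b, c, d})) = stab_card 4"
    using card_pointwise_stab_real[of "{a, b, c, d}" 4] distinct ab cd by simp
  ultimately show ?thesis by (simp add: card_Times_self_Diff_Un_real power2_eq_square)
qed

lemma finite_event_index: "finite event_index"
  unfolding event_index_def using finite_two_subsets by simp

lemma sum_event_index:
  "(\<Sum>j\<in>event_index. f j) = (\<Sum>i\<in>N. f (Inl i)) + (\<Sum>S\<in>two_subsets. f (Inr S))"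
  unfolding event_index_def using finite_two_subsets by (simp add: sum_image_Inl_Un_image_Inr)

lemma sum_card_event:
  "(\<Sum>j\<in>event_index. real (card (event j)))
     = real n * stab_card 1 ^ 2 + real (n choose 2) * (3 * stab_card 2 ^ 2)"
proof -
  have "(\<Sum>j\<in>event_index. real (card (event j)))
      = (\<Sum>i\<in>N. real (card (event (Inl i)))) + (\<Sum>S\<in>two_subsets. real (card (event (Inr S))))"
    by (rule sum_event_index)
  also have "\<dots> = (\<Sum>i\<in>N. stab_card 1 ^ 2) + (\<Sum>S\<in>two_subsets. 3 * stab_card 2 ^ 2)"
    using card_event_Inl card_event_Inr by simp
  finally show ?thesis using card_two_subsets by simp
qed

lemma sum_card_event_Inl_Int_others:
  assumes i: "i \<in> N"
  shows "(\<Sum>k\<in>event_index - {Inl i}. real (card (event (Inl i) \<inter> event k)))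
           = (real n - 1) * stab_card 2 ^ 2 + real ((n - 1) choose 2) * (3 * stab_card 3 ^ 2)"
proof -
  have "event_index - {Inl i} = Inl ` (N - {i}) \<union> Inr ` two_subsets"
    unfolding event_index_def by auto
  then have "(\<Sum>k\<in>event_index - {Inl i}. real (card (event (Inl i) \<inter> event k)))
      = (\<Sum>j\<in>N - {i}. real (card (event (Inl i) \<inter> event (Inl j))))
        + (\<Sum>S\<in>two_subsets. real (card (event (Inl i) \<inter> event (Inr S))))"
    using finite_two_subsets by (simp add: sum_image_Inl_Un_image_Inr)
  also have "\<dots> = (\<Sum>j\<in>N - {i}. stab_card 2 ^ 2)
                   + (\<Sum>S\<in>two_subsets. if i \<notin> S then 3 * stab_card 3 ^ 2 else 0)"
    using card_event_Inl_Int_Inl card_event_Inl_Int_Inr event_Inl_Int_Inr_empty i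
    by (intro arg_cong2[where f = "(+)"] sum.cong) auto
  finally show ?thesis
    using i card_two_subsets_avoiding sum_if_const_real[OF finite_two_subsets] by (simp add: of_nat_diff)
qed

lemma sum_card_event_Inr_Int_others:
  assumes S: "S \<in> two_subsets"
  shows "(\<Sum>k\<in>event_index - {Inr S}. real (card (event (Inr S) \<inter> event k)))
           = (real n - 2) * (3 * stab_card 3 ^ 2) + real ((n - 2) choose 2) * (9 * stab_card 4 ^ 2)"
proof -
  have "event_index - {Inr S} = Inl ` N \<union> Inr ` (two_subsets - {S})"
    unfolding event_index_def by auto
  then have "(\<Sum>k\<in>event_index - {Inr S}. real (card (event (Inr S) \<inter> event k)))
      = (\<Sum>j\<in>N. real (card (event (Inr S) \<inter> event (Inl j))))
        + (\<Sum>T\<in>two_subsets - {S}. real (card (event (Inr S) \<inter> event (Inr T))))"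
    using finite_two_subsets by (simp add: sum_image_Inl_Un_image_Inr)
  also have "\<dots> = (\<Sum>j\<in>N. if j \<notin> S then 3 * stab_card 3 ^ 2 else 0)
                   + (\<Sum>T\<in>two_subsets - {S}. if S \<inter> T = {} then 9 * stab_card 4 ^ 2 else 0)"
    using card_event_Inl_Int_Inr event_Inl_Int_Inr_empty card_event_Inr_Int_Inr
      event_Inr_Int_Inr_empty S
    by (intro arg_cong2[where f = "(+)"] sum.cong) (auto simp: Int_commute)
  moreover have "card {j\<in>N. j \<notin> S} = n - 2"
  proof -
    obtain a b where "S = {a, b}" "a \<noteq> b" "a \<in> N" "b \<in> N" using two_subsetsE[OF S] .
    moreover have "{j\<in>N. j \<notin> S} = N - S" by auto
    ultimately show ?thesis by (simp add: card_Diff_subset)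
  qed
  ultimately show ?thesis
    using card_two_subsets_disjoint[OF S] sum_if_const_real[of N] n_ge_14
      sum_if_const_real[of "two_subsets - {S}" "\<lambda>T. S \<inter> T = {}"] finite_two_subsets
    by (simp add: of_nat_diff)
qed

lemma sum_card_event_Int_event:
  "(\<Sum>j\<in>event_index. \<Sum>k\<in>event_index - {j}. real (card (event j \<inter> event k)))
     = real n * ((real n - 1) * stab_card 2 ^ 2 + real ((n - 1) choose 2) * (3 * stab_card 3 ^ 2))
       + real (n choose 2) * ((real n - 2) * (3 * stab_card 3 ^ 2)
                              + real ((n - 2) choose 2) * (9 * stab_card 4 ^ 2))"
  using sum_card_event_Inl_Int_others sum_card_event_Inr_Int_others
  by (simp add: sum_event_index card_two_subsets)

lemma card_UNION_event_gt:
  "real (card (\<Union>j\<in>event_index. event j)) > (1 / real n + 0.93 / (real n)^2) * real (card C) ^ 2"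
proof -
  define x where "x = real n"
  define g where "g = real (card C)"
  have x: "x \<ge> 14" unfolding x_def using n_ge_14 by simp
  have choose: "real (n choose 2) = x * (x - 1) / 2" "real ((n - 1) choose 2) = (x - 1) * (x - 2) / 2"
    "real ((n - 2) choose 2) = (x - 2) * (x - 3) / 2"
    using n_ge_14 unfolding x_def real_choose_two by (auto simp: of_nat_diff algebra_simps)
  have "g > 0" unfolding g_def using finite_carrier id_in_carrier card_gt_0_iff by fastforce
  then have "(1/x + 0.93/x^2) * g^2 < g^2 * (1/x + (1/(x*(x-1)) - 3/(2*x*(x-1)*(x-2)) - 9/(8*x*(x-1)*(x-2)*(x-3))))"
    using correction_term_gt[OF x] by (simp add: mult.commute)
  also have "\<dots> = (\<Sum>j\<in>event_index. real (card (event j)))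
                   - (\<Sum>j\<in>event_index. \<Sum>k\<in>event_index - {j}. real (card (event j \<inter> event k))) / 2"
    unfolding sum_card_event sum_card_event_Int_event stab_card_values choose
    using bonferroni_bound_closed_form[of x "x - 1" "x - 2" "x - 3" g] x unfolding x_def g_def by simp
  also have "\<dots> \<le> real (card (\<Union>j\<in>event_index. event j))"
    by (rule card_UNION_ge_Bonferroni[OF finite_event_index finite_event])
  finally show ?thesis unfolding x_def g_def .
qed

lemma maximal_subgroup_if_overgroups_large:
  assumes "subgroup M X" "M \<noteq> C"
    and "\<And>H. subgroup H X \<Longrightarrow> M \<subseteq> H \<Longrightarrow> H \<noteq> M \<Longrightarrow> card C \<le> card H"
  shows "maximal_subgroup M X"
  unfolding maximal_subgroup_def
proof (intro conjI allI impI assms(1,2))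
  fix H assume H: "subgroup H X \<and> M \<subseteq> H"
  then have "H \<subseteq> C" by (simp add: subgroup.subset)
  then show "H = M \<or> H = C"
    using assms(3) H finite_carrier by (metis card_seteq)
qed

lemma moves_point_in_carrier:
  assumes "a \<in> N" "c \<in> N" "a \<noteq> c"
  obtains t where "t \<in> C" "t a = c"
proof -
  obtain u v where uv: "u \<in> N" "v \<in> N" "u \<noteq> v" "u \<notin> {a, c, a, c}" "v \<notin> {a, c, a, c}"
    using obtain_two_avoiding .
  have "transpose a c \<circ> transpose u v \<in> C"
    by (intro double_transposition_in_carrier) (use assms uv in auto)
  moreover have "(transpose a c \<circ> transpose u v) a = c" using uv by simp
  ultimately show ?thesis using that by blast
qed

lemma maximal_pointwise_stab_point:
  assumes i: "i \<in> N"
  shows "maximal_subgroup (pointwise_stab C {i}) X"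
proof (rule maximal_subgroup_if_overgroups_large[OF subgroup_pointwise_stab])
  obtain j where j: "j \<in> N" "j \<noteq> i" using obtain_two_avoiding[of i i i i] by blast
  then obtain t where "t \<in> C" "t i = j" using moves_point_in_carrier i by metis
  then show "pointwise_stab C {i} \<noteq> C" using j unfolding pointwise_stab_def by auto
next
  fix H assume H: "subgroup H X" and M: "pointwise_stab C {i} \<subseteq> H" and ne: "H \<noteq> pointwise_stab C {i}"
  have HC: "H \<subseteq> C" using H by (simp add: subgroup.subset)
  obtain h where h: "h \<in> H" "h \<notin> pointwise_stab C {i}" using M ne by blast
  then have hi: "h i \<noteq> i" "h i \<in> N" using HC carrier_maps_into[OF _ i] unfolding pointwise_stab_def by auto
  have transitive: "\<exists>k\<in>H. k i = y" if y: "y \<in> N" for y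
  proof (cases "y = i")
    case True then show ?thesis using subgroup_id[OF H] by (intro bexI[of _ id]) simp_all
  next
    case False
    have "transpose (h i) y permutes N" using hi y by (simp add: permutes_swap_id)
    then obtain q where q: "q \<in> C" "\<And>z. z \<in> set [i, h i] \<Longrightarrow> q z = transpose (h i) y z"
      using agrees_on_six_points[of _ "[i, h i]"] by auto
    then have "q \<in> pointwise_stab C {i}" using False hi unfolding pointwise_stab_def by simp
    then have "q \<circ> h \<in> H" using subgroup_comp_closed[OF H] M h by blast
    moreover have "(q \<circ> h) i = y" using q by simp
    ultimately show ?thesis by blast
  qed
  have "card N * card (pointwise_stab C {i}) \<le> card H"
  proof (rule orbit_times_stabiliser_card_le[where act = "\<lambda>k z. k z" and base = i])
    show "finite H" using finite_subset[OF HC finite_carrier] .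
    show "k \<circ> m \<in> H" if "k \<in> H" "m \<in> pointwise_stab C {i}" for k m
      using subgroup_comp_closed[OF H] that M by blast
    show "(k \<circ> m) i = k i" if "m \<in> pointwise_stab C {i}" for k m
      using that unfolding pointwise_stab_def by simp
  qed (use M HC inj_carrier transitive in auto)
  moreover have "card N * card (pointwise_stab C {i}) = card C"
    using card_pointwise_stab[of "{i}"] i by (simp add: falling_factorial_def mult.commute)
  ultimately show "card C \<le> card H" by simp
qed

lemma intransitive_pointwise_stab_point:
  assumes i: "i \<in> N"
  shows "intransitive_on n (pointwise_stab C {i})"
proof -
  obtain j where j: "j \<in> N" "j \<noteq> i" using obtain_two_avoiding[of i i i i] by blast
  then have "\<forall>h\<in>pointwise_stab C {i}. h i \<noteq> j" unfolding pointwise_stab_def by auto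
  then show ?thesis unfolding intransitive_on_def using i j by blast
qed

lemma intransitive_setwise_stab_pair:
  assumes "a \<in> N" "b \<in> N"
  shows "intransitive_on n (setwise_stab C {a, b})"
proof -
  obtain c where c: "c \<in> N" "c \<notin> {a, b}" using obtain_two_avoiding[of a b a a] by blast
  have "\<forall>h\<in>setwise_stab C {a, b}. h a \<noteq> c"
    using c unfolding setwise_stab_def by auto
  then show ?thesis unfolding intransitive_on_def using assms c by blast
qed

context
  fixes H :: "(nat \<Rightarrow> nat) set" and a b :: nat
  assumes H: "subgroup H X" and stab_le: "setwise_stab C {a, b} \<subseteq> H"
    and ab: "a \<in> N" "b \<in> N" "a \<noteq> b"
begin

lemma image_in_set_orbit:
  assumes "T \<in> set_orbit H {a, b}" "q \<in> H"
  shows "q ` T \<in> set_orbit H {a, b}"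
proof -
  obtain k where k: "k \<in> H" "T = k ` {a, b}" using assms(1) unfolding set_orbit_def by blast
  then have "q ` T = (q \<circ> k) ` {a, b}" by (simp add: image_comp)
  then show ?thesis using subgroup_comp_closed[OF H assms(2) k(1)] unfolding set_orbit_def by blast
qed

lemma in_subgroup_if_stabilises_set_orbit_member:
  assumes "T \<in> set_orbit H {a, b}" "q \<in> C" "q ` T = T"
  shows "q \<in> H"
proof -
  obtain k where k: "k \<in> H" "T = k ` {a, b}" using assms(1) unfolding set_orbit_def by blast
  have kC: "k \<in> C" using k(1) H by (auto dest: subgroup.subset)
  define k' where "k' = inv\<^bsub>X\<^esub> k"
  have k'H: "k' \<in> H" unfolding k'_def using subgroup.m_inv_closed[OF H k(1)] .
  have k'C: "k' \<in> C" unfolding k'_def using inv_in_carrier(1)[OF kC] .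
  have k'k: "k' (k z) = z" and kk': "k (k' z) = z" for z
    unfolding k'_def using inv_in_carrier(2,3)[OF kC] by auto
  have "(k' \<circ> q \<circ> k) ` {a, b} = k' ` q ` T" using k(2) by (simp add: image_comp)
  also have "\<dots> = {a, b}" using assms(3) k(2) k'k by (simp add: image_comp)
  finally have "k' \<circ> q \<circ> k \<in> H"
    using stab_le comp_in_carrier[OF comp_in_carrier[OF k'C assms(2)] kC] unfolding setwise_stab_def
    by blast
  then have "k \<circ> (k' \<circ> q \<circ> k) \<circ> k' \<in> H"
    using subgroup_comp_closed[OF H] k(1) k'H by blast
  moreover have "k \<circ> (k' \<circ> q \<circ> k) \<circ> k' = q" by (simp add: fun_eq_iff kk')
  ultimately show ?thesis by simp
qed

lemma set_orbit_contains_crossing_pair: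
  assumes h: "h \<in> H" "h \<notin> setwise_stab C {a, b}"
  obtains s e where "s \<in> {a, b}" "e \<in> N" "e \<notin> {a, b}" "{s, e} \<in> set_orbit H {a, b}"
proof -
  have hC: "h \<in> C" using h(1) H by (auto dest: subgroup.subset)
  have image: "{h a, h b} \<in> set_orbit H {a, b}" using h(1) unfolding set_orbit_def by auto
  have hab: "h a \<noteq> h b" using inj_carrier[OF hC] ab(3) by (metis injD)
  have hN: "h a \<in> N" "h b \<in> N" using carrier_maps_into hC ab by auto
  have moved: "{h a, h b} \<noteq> {a, b}" using h(2) hC unfolding setwise_stab_def by auto
  show ?thesis
  proof (cases "h a \<in> {a, b} \<or> h b \<in> {a, b}")
    case True
    show ?thesis
    proof (cases "h a \<in> {a, b}")
      case True
      then have "h b \<notin> {a, b}" using moved hab by auto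
      then show ?thesis using that True image hN by blast
    next
      case False
      then have "h b \<in> {a, b}" using \<open>h a \<in> {a, b} \<or> h b \<in> {a, b}\<close> by blast
      then show ?thesis using that False image hN by (simp add: insert_commute)
    qed
  next
    case False
    obtain e where e: "e \<in> N" "e \<notin> {a, b, h a, h b}" using obtain_two_avoiding[of a b "h a" "h b"] by blast
    have "transpose b e permutes N" using ab e by (simp add: permutes_swap_id)
    then obtain q where q: "q \<in> C" "\<And>z. z \<in> set [a, b, h a, h b, e] \<Longrightarrow> q z = transpose b e z"
      using agrees_on_six_points[of _ "[a, b, h a, h b, e]"] by auto
    have qv: "q a = a" "q b = e" "q (h a) = h a" "q (h b) = h b" using q ab(3) e False by auto
    then have "q \<in> H"
      using in_subgroup_if_stabilises_set_orbit_member[OF image q(1)] by simp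
    then have "q ` {a, b} \<in> set_orbit H {a, b}" unfolding set_orbit_def by (rule imageI)
    moreover have "q ` {a, b} = {a, e}" using qv by simp
    ultimately have "{a, e} \<in> set_orbit H {a, b}" by simp
    then show ?thesis using that e by blast
  qed
qed

lemma crossing_pairs_in_set_orbit:
  assumes orb: "{s0, e0} \<in> set_orbit H {a, b}" and se0: "s0 \<in> {a, b}" "e0 \<in> N" "e0 \<notin> {a, b}"
    and se: "s \<in> {a, b}" "e \<in> N" "e \<notin> {a, b}"
  shows "{s, e} \<in> set_orbit H {a, b}"
proof -
  define q0 where "q0 = transpose e0 e \<circ> transpose s0 s"
  have "q0 permutes N" unfolding q0_def using se se0 ab
    by (intro permutes_compose permutes_swap_id) auto
  then obtain q where q: "q \<in> C" "\<And>z. z \<in> set [a, b, e0, e] \<Longrightarrow> q z = q0 z"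
    using agrees_on_six_points[of _ "[a, b, e0, e]"] by auto
  have swap_in: "transpose s0 s z \<in> {a, b}" if "z \<in> {a, b}" for z
    using that se(1) se0(1) by (auto simp: transpose_def)
  have q0_ab: "q0 z \<in> {a, b}" if "z \<in> {a, b}" for z
  proof -
    have "transpose s0 s z \<noteq> e0" "transpose s0 s z \<noteq> e"
      using swap_in[OF that] se(3) se0(3) by auto
    then show ?thesis unfolding q0_def using swap_in[OF that] by simp
  qed
  have "inj q0" unfolding q0_def by (simp add: inj_compose)
  then have "q0 a \<noteq> q0 b" using ab(3) by (meson injD)
  then have "{q0 a, q0 b} = {a, b}" using q0_ab[of a] q0_ab[of b] by auto
  then have "q ` {a, b} = {a, b}" using q by simp
  then have "q \<in> H" using stab_le q(1) unfolding setwise_stab_def by blast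
  moreover have "q0 s0 = s" "q0 e0 = e"
    using se(1,3) se0(1,3) unfolding q0_def by auto
  then have "q s0 = s" "q e0 = e" using q se0(1) by auto
  ultimately show ?thesis using image_in_set_orbit[OF orb, of q] by simp
qed

lemma disjoint_pairs_in_set_orbit:
  assumes crossing: "\<And>s e. s \<in> {a, b} \<Longrightarrow> e \<in> N \<Longrightarrow> e \<notin> {a, b} \<Longrightarrow> {s, e} \<in> set_orbit H {a, b}"
    and cd: "c \<in> N" "d \<in> N" "c \<notin> {a, b}" "d \<notin> {a, b}" "c \<noteq> d"
  shows "{c, d} \<in> set_orbit H {a, b}"
proof -
  have "transpose b d permutes N" using ab cd by (simp add: permutes_swap_id)
  then obtain q where q: "q \<in> C" "\<And>z. z \<in> set [a, b, c, d] \<Longrightarrow> q z = transpose b d z"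
    using agrees_on_six_points[of _ "[a, b, c, d]"] by auto
  have qv: "q a = a" "q b = d" "q c = c" using q ab(3) cd by auto
  have "q \<in> H"
    using in_subgroup_if_stabilises_set_orbit_member[OF crossing[of a c] q(1)] qv cd by auto
  moreover have "{b, c} \<in> set_orbit H {a, b}" using crossing cd by simp
  ultimately have "q ` {b, c} \<in> set_orbit H {a, b}" by (rule image_in_set_orbit[rotated])
  moreover have "q ` {b, c} = {c, d}" using qv by auto
  ultimately show ?thesis by simp
qed

lemma two_subsets_subset_set_orbit:
  assumes "h \<in> H" "h \<notin> setwise_stab C {a, b}"
  shows "two_subsets \<subseteq> set_orbit H {a, b}"
proof
  obtain s0 e0 where se0: "s0 \<in> {a, b}" "e0 \<in> N" "e0 \<notin> {a, b}" "{s0, e0} \<in> set_orbit H {a, b}"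
    using set_orbit_contains_crossing_pair[OF assms] .
  have crossing: "{s, e} \<in> set_orbit H {a, b}" if "s \<in> {a, b}" "e \<in> N" "e \<notin> {a, b}" for s e
    using crossing_pairs_in_set_orbit[OF se0(4,1-3) that] .
  fix T assume "T \<in> two_subsets"
  then obtain c d where cd: "T = {c, d}" "c \<noteq> d" "c \<in> N" "d \<in> N" by (rule two_subsetsE)
  consider "c \<in> {a, b}" "d \<in> {a, b}" | "c \<in> {a, b}" "d \<notin> {a, b}" | "c \<notin> {a, b}" "d \<in> {a, b}"
    | "c \<notin> {a, b}" "d \<notin> {a, b}" by blast
  then show "T \<in> set_orbit H {a, b}"
  proof cases
    case 1
    then have "T = id ` {a, b}" using cd by auto
    then show ?thesis using subgroup_id[OF H] unfolding set_orbit_def by blast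
  next
    case 2 then show ?thesis using crossing cd by simp
  next
    case 3 then show ?thesis using crossing[of d c] cd by (simp add: insert_commute)
  next
    case 4 then show ?thesis using disjoint_pairs_in_set_orbit[OF crossing] cd by simp
  qed
qed

end

lemma maximal_setwise_stab_pair:
  assumes ab: "a \<in> N" "b \<in> N" "a \<noteq> b"
  shows "maximal_subgroup (setwise_stab C {a, b}) X"
proof (rule maximal_subgroup_if_overgroups_large[OF subgroup_setwise_stab])
  obtain c where c: "c \<in> N" "c \<notin> {a, b}" using obtain_two_avoiding[of a b a a] by blast
  moreover obtain t where "t \<in> C" "t a = c" using moves_point_in_carrier[of a c] ab c by auto
  ultimately have "t \<notin> setwise_stab C {a, b}" unfolding setwise_stab_def by blast
  then show "setwise_stab C {a, b} \<noteq> C" using \<open>t \<in> C\<close> by blast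
next
  fix H assume H: "subgroup H X" and M: "setwise_stab C {a, b} \<subseteq> H"
    and ne: "H \<noteq> setwise_stab C {a, b}"
  have HC: "H \<subseteq> C" using H by (simp add: subgroup.subset)
  obtain h where "h \<in> H" "h \<notin> setwise_stab C {a, b}" using M ne by blast
  then have orbit: "two_subsets \<subseteq> set_orbit H {a, b}"
    using two_subsets_subset_set_orbit[OF H M ab] by blast
  have "card two_subsets * card (setwise_stab C {a, b}) \<le> card H"
  proof (rule orbit_times_stabiliser_card_le[where act = "\<lambda>k T. k ` T" and base = "{a, b}"])
    show "finite H" using finite_subset[OF HC finite_carrier] .
    show "k \<circ> m \<in> H" if "k \<in> H" "m \<in> setwise_stab C {a, b}" for k m
      using subgroup_comp_closed[OF H] that M by blast
    show "(k \<circ> m) ` {a, b} = k ` {a, b}" if "m \<in> setwise_stab C {a, b}" for k m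
    proof -
      have m: "m ` {a, b} = {a, b}" using that unfolding setwise_stab_def by blast
      show ?thesis by (simp only: image_comp[symmetric] m)
    qed
  qed (use M HC inj_carrier orbit in \<open>auto simp: set_orbit_def\<close>)
  moreover have "real (card two_subsets * card (setwise_stab C {a, b})) = real (card C)"
    using card_two_subsets card_setwise_stab_pair_real[OF ab] n_ge_14
    by (simp add: real_choose_two stab_card_values)
  ultimately show "card C \<le> card H" by linarith
qed

lemma event_pairs_in_intransitive_maximal:
  assumes "j \<in> event_index" "(p, q) \<in> event j"
  shows "\<exists>M. maximal_subgroup M X \<and> intransitive_on n M \<and> generate X {p, q} \<subseteq> M"
proof (cases j)
  case (Inl i)
  then have i: "i \<in> N" using assms(1) unfolding event_index_def by auto
  have "{p, q} \<subseteq> pointwise_stab C {i}" using assms(2) Inl unfolding event_def by auto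
  then have "generate X {p, q} \<subseteq> pointwise_stab C {i}"
    using group.generate_subgroup_incl[OF is_group _ subgroup_pointwise_stab] by blast
  then show ?thesis
    using maximal_pointwise_stab_point[OF i] intransitive_pointwise_stab_point[OF i] by blast
next
  case (Inr S)
  then have "S \<in> two_subsets" using assms(1) unfolding event_index_def by auto
  then obtain a b where ab: "S = {a, b}" "a \<noteq> b" "a \<in> N" "b \<in> N" by (rule two_subsetsE)
  have "{p, q} \<subseteq> setwise_stab C S" using assms(2) Inr unfolding event_def by auto
  then have "generate X {p, q} \<subseteq> setwise_stab C S"
    using group.generate_subgroup_incl[OF is_group _ subgroup_setwise_stab] by blast
  then show ?thesis
    using maximal_setwise_stab_pair[OF ab(3,4,2)] intransitive_setwise_stab_pair[OF ab(3,4)] ab(1)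
    by blast
qed

lemma p_intrans_gt: "p_intrans n X > 1 / real n + 0.93 / (real n)^2"
proof -
  define G where "G = {(p, q) \<in> C \<times> C.
    \<exists>M. maximal_subgroup M X \<and> intransitive_on n M \<and> generate X {p, q} \<subseteq> M}"
  have "(\<Union>j\<in>event_index. event j) \<subseteq> G"
    unfolding G_def using event_subset event_pairs_in_intransitive_maximal by blast
  moreover have "finite G" unfolding G_def using finite_carrier by (auto intro: finite_subset[of _ "C \<times> C"])
  ultimately have "card (\<Union>j\<in>event_index. event j) \<le> card G" by (rule card_mono[rotated])
  then have "(1 / real n + 0.93 / (real n)^2) * real (card C) ^ 2 < real (card G)"
    using card_UNION_event_gt by linarith
  moreover have "real (card C) > 0" using finite_carrier id_in_carrier card_gt_0_iff by fastforce
  ultimately show ?thesis unfolding p_intrans_def G_def[symmetric] by (simp add: pos_less_divide_eq)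
qed

end

lemma sym_or_alt_group_sym: "n \<ge> 14 \<Longrightarrow> sym_or_alt_group n (sym_group n)"
proof (rule sym_or_alt_group.intro)
  fix q u v assume "q permutes {1..n}"
  then show "q \<in> carrier (sym_group n) \<or> q \<circ> transpose u v \<in> carrier (sym_group n)"
    by (simp add: sym_group_carrier)
next
  fix a b u v assume "a \<in> {1..n}" "b \<in> {1..n}" "u \<in> {1..n}" "v \<in> {1..n}"
  then show "transpose a b \<circ> transpose u v \<in> carrier (sym_group n)"
    by (simp add: sym_group_carrier permutes_compose permutes_swap_id)
qed (auto simp: sym_group_is_group sym_group_carrier sym_group_mult sym_group_one
  card_pointwise_stab_sym_group)

lemma sym_or_alt_group_alt: "n \<ge> 14 \<Longrightarrow> sym_or_alt_group n (alt_group n)"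
proof (rule sym_or_alt_group.intro)
  fix q u v assume q: "q permutes {1..n}" and uv: "u \<in> {1..n}" "v \<in> {1..n}" "u \<noteq> v"
  have "evenperm (q \<circ> transpose u v) = (evenperm q = evenperm (transpose u v))"
    using evenperm_comp[OF permutes_imp_permutation[OF _ q] permutation_swap_id] by simp
  then have "evenperm q \<or> evenperm (q \<circ> transpose u v)" using evenperm_swap[of u v] uv(3) by auto
  moreover have "q \<circ> transpose u v permutes {1..n}"
    using q uv by (simp add: permutes_compose permutes_swap_id)
  ultimately show "q \<in> carrier (alt_group n) \<or> q \<circ> transpose u v \<in> carrier (alt_group n)"
    using q by (auto simp: alt_group_carrier)
next
  fix a b u v assume "a \<in> {1..n}" "b \<in> {1..n}" "u \<in> {1..n}" "v \<in> {1..n}" "distinct [a, b, u, v]"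
  moreover have "evenperm (transpose a b \<circ> transpose u v)
                   = (evenperm (transpose a b) = evenperm (transpose u v))"
    using evenperm_comp[OF permutation_swap_id permutation_swap_id] .
  ultimately show "transpose a b \<circ> transpose u v \<in> carrier (alt_group n)"
    by (simp add: alt_group_carrier permutes_compose permutes_swap_id evenperm_swap)
next
  fix K assume "n \<ge> 14" "K \<subseteq> {1..n}" "card K \<le> 4"
  then show "card (pointwise_stab (carrier (alt_group n)) K) * falling_factorial n (card K)
               = card (carrier (alt_group n))"
    by (intro card_pointwise_stab_alt_group) auto
qed (auto simp: alt_group_is_group alt_group_carrier alt_group_mult alt_group_one)

theorem lemma2p3:
  fixes n :: nat and X :: "(nat \<Rightarrow> nat) monoid"
  assumes "n \<ge> 14"
    and "X = alt_group n \<or> X = sym_group n"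
  shows "p_intrans n X > 1 / real n + 0.93 / (real n)^2"
  using assms sym_or_alt_group.p_intrans_gt sym_or_alt_group_alt sym_or_alt_group_sym by metis

end
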